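(* For all sufficiently large $n$, there is a covering $3$-colouring of the edges of $K_n^{(4)}$ with no $5$-set of vertices whose $4$-subsets receive all three colours.
   Context: $K_n^{(4)}$ is the complete $4$-uniform hypergraph on $n$ vertices (edges are all $4$-subsets). A $4$-uniform hypergraph on vertex set $V$ is a covering if every $3$-subset of $V$ is contained in some edge. A colouring of the edges of $K_n^{(4)}$ is covering if for each colour, the $4$-graph on all $n$ vertices formed by the edges of that colour is a covering. *)

theory Defs
  imports Main
begin

(* Vertex set of K_n^(4) is {..<n}; its edges are the 4-subsets.
   An edge colouring with k colours is a function c on sets taking values in {..<k}
   on every edge (values off edges are irrelevant). *)

definition edges4 :: "nat \<Rightarrow> nat set set" where
  "edges4 n = {e. e \<subseteq> {..<n} \<and> card e = 4}"

definition is_colouring :: "nat \<Rightarrow> nat \<Rightarrow> (nat set \<Rightarrow> nat) \<Rightarrow> bool" where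
  "is_colouring n k c \<longleftrightarrow> (\<forall>e \<in> edges4 n. c e < k)"

definition is_covering :: "nat \<Rightarrow> nat set set \<Rightarrow> bool" where
  "is_covering n H \<longleftrightarrow>
     (\<forall>T. T \<subseteq> {..<n} \<and> card T = 3 \<longrightarrow> (\<exists>e \<in> H. T \<subseteq> e))"

definition covering_colouring :: "nat \<Rightarrow> nat \<Rightarrow> (nat set \<Rightarrow> nat) \<Rightarrow> bool" where
  "covering_colouring n k c \<longleftrightarrow> is_colouring n k c \<and>
     (\<forall>i < k. is_covering n {e \<in> edges4 n. c e = i})"

end

theory Submission
  imports Defs
begin

text \<open>
  Split the vertices into 4 coarse classes (residues mod 4) and each of them into 4 fine classes
  (residues mod 16).  The colour of a 4-set depends only on its partition type under the coarse
  and under the fine partition.  Since the fine partition refines the coarse one, the colours of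
  the five 4-subsets of any 5-set are determined by finitely many equality patterns, and a case
  check shows they never use all three colours.  Conversely, for every triple \<open>T\<close> a fourth
  vertex can be added in the same fine class as a point of \<open>T\<close>, in the same coarse but a new
  fine class, or in a new coarse class; these choices realise every colour.
\<close>

text \<open>
  \<open>class_pairs f e\<close> is the sum of the squared sizes of the classes of \<open>f\<close> within \<open>e\<close>; on a
  4-set its values 4, 6, 8, 10, 16 correspond to the partition types 1111, 211, 22, 31, 4.
  Counts and colours are integers so that the finite case checks below are linear integer
  arithmetic for \<open>smt\<close>.
\<close>

definition class_pairs :: "('a \<Rightarrow> 'b) \<Rightarrow> 'a set \<Rightarrow> int" where
  "class_pairs f e = (\<Sum>x\<in>e. \<Sum>y\<in>e. if f x = f y then 1 else 0)"

definition type_colour :: "int \<Rightarrow> int \<Rightarrow> int" where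
  "type_colour k l =
     (if k = 4 then 0
      else if k = 6 then (if l = 4 then 1 else 2)
      else if k = 10 then (if l = 4 then 0 else 1)
      else if k = 8 then (if l = 4 then 2 else if l = 6 then 1 else 0)
      else if l = 4 then 2 else if l = 6 then 1 else if l = 10 then 0 else 2)"

definition nested_colour :: "('a \<Rightarrow> 'b) \<Rightarrow> ('a \<Rightarrow> 'c) \<Rightarrow> 'a set \<Rightarrow> int" where
  "nested_colour coarse fine e = type_colour (class_pairs coarse e) (class_pairs fine e)"

lemma type_colour_range: "type_colour k l \<in> {0, 1, 2}"
  unfolding type_colour_def by auto

lemma class_pairs_4:
  assumes "distinct [a, b, c, d]"
  shows "class_pairs f {a, b, c, d} = 4 + 2 *
    ((if f a = f b then 1 else 0) + (if f a = f c then 1 else 0) + (if f a = f d then 1 else 0) +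
     (if f b = f c then 1 else 0) + (if f b = f d then 1 else 0) + (if f c = f d then 1 else 0))"
  using assms unfolding class_pairs_def by (auto simp: eq_commute)

lemma nested_colour_not_rainbow_5:
  assumes "distinct [a, b, c, d, e]"
    and refines: "\<And>x y. fine x = fine y \<Longrightarrow> coarse x = coarse y"
  shows "\<not> {0, 1, 2} \<subseteq> nested_colour coarse fine `
           {{b, c, d, e}, {a, c, d, e}, {a, b, d, e}, {a, b, c, e}, {a, b, c, d}}"
    (is "\<not> _ \<subseteq> ?C")
proof -
  have "distinct [b, c, d, e]" "distinct [a, c, d, e]" "distinct [a, b, d, e]"
    "distinct [a, b, c, e]" "distinct [a, b, c, d]"
    using assms(1) by auto
  note class_pairs = this[THEN class_pairs_4[where f = coarse]] this[THEN class_pairs_4[where f = fine]]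
  have "\<not> (0 \<in> ?C \<and> 1 \<in> ?C \<and> 2 \<in> ?C)"
    unfolding image_insert image_empty insert_iff empty_iff nested_colour_def class_pairs
    using refines[of a b] refines[of a c] refines[of a d] refines[of a e] refines[of b c]
      refines[of b d] refines[of b e] refines[of c d] refines[of c e] refines[of d e]
    unfolding type_colour_def
    by (smt (z3))
  then show ?thesis
    by (simp only: insert_subset empty_subsetI simp_thms)
qed

lemma nested_colour_covers_3:
  assumes "distinct [a, b, c]"
    and refines: "\<And>x y. fine x = fine y \<Longrightarrow> coarse x = coarse y"
    and xa: "fine xa = fine a" "xa \<notin> {a, b, c}"
    and xb: "fine xb = fine b" "xb \<notin> {a, b, c}"
    and xc: "fine xc = fine c" "xc \<notin> {a, b, c}"
    and ya: "coarse ya = coarse a" "fine ya \<notin> {fine a, fine b, fine c}"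
    and yb: "coarse yb = coarse b" "fine yb \<notin> {fine a, fine b, fine c}"
    and yc: "coarse yc = coarse c" "fine yc \<notin> {fine a, fine b, fine c}"
    and z: "coarse z \<notin> {coarse a, coarse b, coarse c}"
    and k: "k \<in> {0, 1, 2}"
  shows "\<exists>w \<in> {xa, xb, xc, ya, yb, yc, z}. nested_colour coarse fine {a, b, c, w} = k"
proof -
  have "distinct [a, b, c, xa]" "distinct [a, b, c, xb]" "distinct [a, b, c, xc]"
    "distinct [a, b, c, ya]" "distinct [a, b, c, yb]" "distinct [a, b, c, yc]" "distinct [a, b, c, z]"
    using assms(1) xa xb xc ya yb yc z by auto
  note class_pairs = this[THEN class_pairs_4[where f = coarse]] this[THEN class_pairs_4[where f = fine]]
  have "k \<in> nested_colour coarse fine `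
          {{a, b, c, xa}, {a, b, c, xb}, {a, b, c, xc}, {a, b, c, ya}, {a, b, c, yb}, {a, b, c, yc}, {a, b, c, z}}"
    using k xa xb xc ya yb yc z
      refines[of a b] refines[of a c] refines[of b c] refines[of xa b] refines[of xa c]
      refines[of xb a] refines[of xb c] refines[of xc a] refines[of xc b] refines[of ya b]
      refines[of ya c] refines[of yb a] refines[of yb c] refines[of yc a] refines[of yc b]
      refines[of a xa] refines[of b xb] refines[of c xc] refines[of z a] refines[of z b]
      refines[of z c] refines[of xa a] refines[of xb b] refines[of xc c]
    unfolding image_insert image_empty insert_iff empty_iff nested_colour_def class_pairs type_colour_def
    by (smt (z3))
  then show ?thesis
    by blast
qed

lemma card_5E:
  assumes "card S = 5"
  obtains a b c d e where "S = {a, b, c, d, e}" "distinct [a, b, c, d, e]"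
proof -
  obtain a R where R: "S = insert a R" "a \<notin> R" "card R = 4"
    using assms card_eq_SucD[of S 4] by auto
  obtain b U where U: "R = insert b U" "b \<notin> U" "card U = 3"
    using R(3) card_eq_SucD[of R 3] by auto
  obtain c d e where "U = {c, d, e}" "distinct [c, d, e]"
    using U(3) by (auto simp: card_3_iff)
  with R U show thesis
    by (intro that) auto
qed

lemma card_4_subsets_of_5:
  assumes "distinct [a, b, c, d, e]"
  shows "{F. F \<subseteq> {a, b, c, d, e} \<and> card F = 4} \<subseteq>
           {{b, c, d, e}, {a, c, d, e}, {a, b, d, e}, {a, b, c, e}, {a, b, c, d}}"
proof (intro subsetI, elim CollectE conjE)
  fix F
  let ?S = "{a, b, c, d, e}"
  assume F: "F \<subseteq> ?S" "card F = 4"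
  have "card (?S - F) = 1"
    using assms F by (simp add: card_Diff_subset finite_subset)
  then obtain x where "?S - F = {x}"
    by (auto simp: card_Suc_eq)
  then have "F = ?S - {x}" "x \<in> ?S"
    using F(1) by auto
  then show "F \<in> {{b, c, d, e}, {a, c, d, e}, {a, b, d, e}, {a, b, c, e}, {a, b, c, d}}"
    using assms by auto
qed

lemma nested_colour_not_rainbow:
  assumes "card S = 5"
    and refines: "\<And>x y. fine x = fine y \<Longrightarrow> coarse x = coarse y"
  shows "\<not> {0, 1, 2} \<subseteq> nested_colour coarse fine ` {e. e \<subseteq> S \<and> card e = 4}"
proof -
  obtain a b c d e where S: "S = {a, b, c, d, e}" "distinct [a, b, c, d, e]"
    using card_5E[OF assms(1)] .
  have "nested_colour coarse fine ` {F. F \<subseteq> S \<and> card F = 4} \<subseteq>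
      nested_colour coarse fine ` {{b, c, d, e}, {a, c, d, e}, {a, b, d, e}, {a, b, c, e}, {a, b, c, d}}"
    unfolding S(1) using card_4_subsets_of_5[OF S(2)] by (rule image_mono)
  with nested_colour_not_rainbow_5[of a b c d e fine coarse, OF S(2) refines] show ?thesis
    by (meson subset_trans)
qed

lemma ex_mod_avoiding:
  fixes r m :: nat
  assumes "r < m"
  shows "\<exists>w < 4 * m. w mod m = r \<and> w \<notin> {x, y, z}"
proof -
  let ?W = "(\<lambda>j. r + m * j) ` {..<4}"
  have "inj_on (\<lambda>j. r + m * j) {..<4}"
    using assms by (auto simp: inj_on_def)
  then have "card ?W = 4"
    by (simp add: card_image)
  moreover have "card {x, y, z} \<le> 3"
    by (simp add: card_insert_if)
  ultimately have "\<not> ?W \<subseteq> {x, y, z}"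
    using card_mono[of "{x, y, z}" ?W] by auto
  then obtain j where j: "j < 4" "r + m * j \<notin> {x, y, z}"
    by auto
  have "r + m * j < m + m * j"
    using assms by simp
  also have "\<dots> \<le> 4 * m"
    using j(1) by (simp add: mult.commute)
  finally show ?thesis
    using assms j(2) by auto
qed

definition mod_colouring :: "nat set \<Rightarrow> nat" where
  "mod_colouring e = nat (nested_colour (\<lambda>v. v mod 4) (\<lambda>v. v mod 16) e)"

lemma int_mod_colouring: "int (mod_colouring e) = nested_colour (\<lambda>v. v mod 4) (\<lambda>v. v mod 16) e"
proof -
  have "nested_colour (\<lambda>v. v mod 4) (\<lambda>v. v mod 16) e \<in> {0, 1, 2}"
    unfolding nested_colour_def by (rule type_colour_range)
  then show ?thesis
    unfolding mod_colouring_def by auto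
qed

lemma mod_colouring_less_3: "mod_colouring e < 3"
proof -
  have "int (mod_colouring e) \<in> {0, 1, 2}"
    unfolding int_mod_colouring nested_colour_def by (rule type_colour_range)
  then show ?thesis
    by auto
qed

lemma mod_16_refines_mod_4: "v mod 16 = w mod 16 \<Longrightarrow> v mod 4 = w mod (4::nat)"
  using mod_mod_cancel[of "4::nat" 16 v] mod_mod_cancel[of "4::nat" 16 w] by simp

lemma mod_colouring_covering:
  assumes "64 \<le> n" "T \<subseteq> {..<n}" "card T = 3" "k < 3"
  shows "\<exists>e \<in> edges4 n. mod_colouring e = k \<and> T \<subseteq> e"
proof -
  obtain a b c where T: "T = {a, b, c}" "distinct [a, b, c]"
    using assms(3) by (auto simp: card_3_iff)
  obtain xa where xa: "xa < 64" "xa mod 16 = a mod 16" "xa \<notin> {a, b, c}"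
    using ex_mod_avoiding[of "a mod 16" 16 a b c] by auto
  obtain xb where xb: "xb < 64" "xb mod 16 = b mod 16" "xb \<notin> {a, b, c}"
    using ex_mod_avoiding[of "b mod 16" 16 a b c] by auto
  obtain xc where xc: "xc < 64" "xc mod 16 = c mod 16" "xc \<notin> {a, b, c}"
    using ex_mod_avoiding[of "c mod 16" 16 a b c] by auto
  obtain ya where ya: "ya < 16" "ya mod 4 = a mod 4" "ya mod 16 \<notin> {a mod 16, b mod 16, c mod 16}"
    using ex_mod_avoiding[of "a mod 4" 4 "a mod 16" "b mod 16" "c mod 16"] by auto
  obtain yb where yb: "yb < 16" "yb mod 4 = b mod 4" "yb mod 16 \<notin> {a mod 16, b mod 16, c mod 16}"
    using ex_mod_avoiding[of "b mod 4" 4 "a mod 16" "b mod 16" "c mod 16"] by auto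
  obtain yc where yc: "yc < 16" "yc mod 4 = c mod 4" "yc mod 16 \<notin> {a mod 16, b mod 16, c mod 16}"
    using ex_mod_avoiding[of "c mod 4" 4 "a mod 16" "b mod 16" "c mod 16"] by auto
  obtain z where z: "z < 4" "z mod 4 \<notin> {a mod 4, b mod 4, c mod 4}"
    using ex_mod_avoiding[of 0 1 "a mod 4" "b mod 4" "c mod 4"] by auto
  have "int k \<in> {0, 1, 2}"
    using assms(4) by auto
  from nested_colour_covers_3[of a b c "\<lambda>v. v mod 16" "\<lambda>v. v mod 4",
      OF T(2) mod_16_refines_mod_4 xa(2,3) xb(2,3) xc(2,3) ya(2,3) yb(2,3) yc(2,3) z(2) this]
  obtain w where w: "w \<in> {xa, xb, xc, ya, yb, yc, z}"
    "nested_colour (\<lambda>v. v mod 4) (\<lambda>v. v mod 16) {a, b, c, w} = int k"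
    by blast
  have "ya \<notin> {a, b, c}" "yb \<notin> {a, b, c}" "yc \<notin> {a, b, c}" "z \<notin> {a, b, c}"
    using ya(3) yb(3) yc(3) z(2) by auto
  then have "w \<notin> {a, b, c}"
    using w(1) xa(3) xb(3) xc(3) by blast
  moreover have "w < 64"
    using w(1) xa(1) xb(1) xc(1) ya(1) yb(1) yc(1) z(1) by auto
  ultimately have "{a, b, c, w} \<in> edges4 n"
    using T assms(1,2) by (auto simp: edges4_def)
  moreover have "mod_colouring {a, b, c, w} = k"
    using w(2) int_mod_colouring of_nat_eq_iff by metis
  ultimately show ?thesis
    using T(1) by blast
qed

lemma mod_colouring_not_rainbow:
  assumes "card S = 5"
  shows "mod_colouring ` {e. e \<subseteq> S \<and> card e = 4} \<noteq> {0, 1, 2}"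
proof
  assume rainbow: "mod_colouring ` {e. e \<subseteq> S \<and> card e = 4} = {0, 1, 2}"
  have "nested_colour (\<lambda>v. v mod 4) (\<lambda>v. v mod 16) ` {e. e \<subseteq> S \<and> card e = 4} =
      int ` mod_colouring ` {e. e \<subseteq> S \<and> card e = 4}"
    by (simp add: image_image int_mod_colouring)
  also have "\<dots> = {0, 1, 2}"
    unfolding rainbow by simp
  finally show False
    using nested_colour_not_rainbow[of S "\<lambda>v. v mod 16" "\<lambda>v. v mod 4", OF assms mod_16_refines_mod_4]
    by simp
qed

theorem lemma16:
  shows "\<exists>N. \<forall>n \<ge> N. \<exists>c. covering_colouring n 3 c \<and>
           \<not> (\<exists>S. S \<subseteq> {..<n} \<and> card S = 5 \<and>
                 c ` {e. e \<subseteq> S \<and> card e = 4} = {0, 1, 2})"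
proof (rule exI[of _ 64], intro allI impI)
  fix n :: nat
  assume n: "64 \<le> n"
  have "is_colouring n 3 mod_colouring"
    unfolding is_colouring_def using mod_colouring_less_3 by blast
  moreover have "is_covering n {e \<in> edges4 n. mod_colouring e = i}" if "i < 3" for i
    unfolding is_covering_def using mod_colouring_covering[OF n _ _ that] by blast
  ultimately have "covering_colouring n 3 mod_colouring"
    unfolding covering_colouring_def by blast
  then show "\<exists>c. covering_colouring n 3 c \<and>
      \<not> (\<exists>S. S \<subseteq> {..<n} \<and> card S = 5 \<and> c ` {e. e \<subseteq> S \<and> card e = 4} = {0, 1, 2})"
    using mod_colouring_not_rainbow by blast
qed

end
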